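(* Let $\mathcal F=(f_t)$ be a continuous flow on a compact metric space $(X,d)$, and suppose $\nu$ is an $(\mathcal F\times\mathcal F)$-invariant Borel probability measure on $X\times X$ which is product expansive at scale $\varepsilon$. Let $\gamma\in(0,\varepsilon/2)$ and for each $t>0$ let $\mathscr A_t$ be a partition adapted to a $(t,\gamma)$-separated set of maximal cardinality. Let $Q\subset X\times X$ be a measurable set with $(f_t\times f_s)Q=Q$ for all $t,s\in\mathbb{R}$. Then for every $\alpha>0$ there exists $t_0$ such that for every $t\ge t_0$ there is a set $U$ which is a union of elements of $\mathscr A_t$ with $\nu(U\triangle Q)<\alpha$.
   Context: $X\times X$ has metric $\tilde d((x,y),(w,z))=\max\{d(x,w),d(y,z)\}$ and product flow $(f_t\times f_t)$; Bowen balls $B_t(p,r)=\{q:\tilde d((f_s\times f_s)p,(f_s\times f_s)q)<r\ \forall s\in[0,t]\}$. A partition $\mathscr A$ is adapted to a maximal $(t,\gamma)$-separated set $E$ if each element $A$ satisfies $B_t(p,\gamma/2)\subset A\subset\overline{B_t}(p,\gamma)$ for some $p\in E$. Product expansive at scale $\varepsilon$: $\nu(\mathrm{NE}^\times(\varepsilon))=0$, where $\Gamma_\varepsilon(x,y)=\{(x',y'):\tilde d((f_tx,f_ty),(f_tx',f_ty'))<\varepsilon\ \forall t\in\mathbb{R}\}$ and $\mathrm{NE}^\times(\varepsilon)=\{(x,y):\Gamma_\varepsilon(x,y)\not\subset f_{[-s,s]}(x)\times f_{[-s,s]}(y)\text{ for any }s>0\}$, with $f_{[-s,s]}(x)=\{f_rx:r\in[-s,s]\}$.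 *)

theory Defs
  imports "HOL-Probability.Probability"
begin

definition continuous_flow :: "(real \<Rightarrow> 'a::metric_space \<Rightarrow> 'a) \<Rightarrow> bool" where
  "continuous_flow f \<longleftrightarrow>
     continuous_on UNIV (\<lambda>(t, x). f t x) \<and>
     (\<forall>x. f 0 x = x) \<and> (\<forall>s t x. f (s + t) x = f s (f t x))"

definition dprod :: "'a::metric_space \<times> 'a \<Rightarrow> 'a \<times> 'a \<Rightarrow> real" where
  "dprod p q = max (dist (fst p) (fst q)) (dist (snd p) (snd q))"

definition pflow :: "(real \<Rightarrow> 'a \<Rightarrow> 'a) \<Rightarrow> real \<Rightarrow> 'a \<times> 'a \<Rightarrow> 'a \<times> 'a" where
  "pflow f t p = (f t (fst p), f t (snd p))"

definition bowen_ball :: "(real \<Rightarrow> 'a::metric_space \<Rightarrow> 'a) \<Rightarrow> real \<Rightarrow> 'a \<times> 'a \<Rightarrow> real \<Rightarrow> ('a \<times> 'a) set" where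
  "bowen_ball f t p r = {q. \<forall>s\<in>{0..t}. dprod (pflow f s p) (pflow f s q) < r}"

definition closed_bowen_ball :: "(real \<Rightarrow> 'a::metric_space \<Rightarrow> 'a) \<Rightarrow> real \<Rightarrow> 'a \<times> 'a \<Rightarrow> real \<Rightarrow> ('a \<times> 'a) set" where
  "closed_bowen_ball f t p r = {q. \<forall>s\<in>{0..t}. dprod (pflow f s p) (pflow f s q) \<le> r}"

definition separated :: "(real \<Rightarrow> 'a::metric_space \<Rightarrow> 'a) \<Rightarrow> real \<Rightarrow> real \<Rightarrow> ('a \<times> 'a) set \<Rightarrow> bool" where
  "separated f t \<gamma> E \<longleftrightarrow>
     (\<forall>p\<in>E. \<forall>q\<in>E. p \<noteq> q \<longrightarrow> (\<exists>s\<in>{0..t}. dprod (pflow f s p) (pflow f s q) > \<gamma>))"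

definition max_card_separated :: "(real \<Rightarrow> 'a::metric_space \<Rightarrow> 'a) \<Rightarrow> real \<Rightarrow> real \<Rightarrow> ('a \<times> 'a) set \<Rightarrow> bool" where
  "max_card_separated f t \<gamma> E \<longleftrightarrow> separated f t \<gamma> E \<and> finite E \<and>
     (\<forall>E'. separated f t \<gamma> E' \<longrightarrow> finite E' \<and> card E' \<le> card E)"

definition adapted_partition :: "(real \<Rightarrow> 'a::metric_space \<Rightarrow> 'a) \<Rightarrow> real \<Rightarrow> real \<Rightarrow> ('a \<times> 'a) set \<Rightarrow> ('a \<times> 'a) set set \<Rightarrow> bool" where
  "adapted_partition f t \<gamma> E \<A> \<longleftrightarrow>
     \<Union>\<A> = UNIV \<and>
     (\<forall>A\<in>\<A>. \<forall>B\<in>\<A>. A \<noteq> B \<longrightarrow> A \<inter> B = {}) \<and>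
     (\<forall>A\<in>\<A>. A \<in> sets borel) \<and>
     (\<forall>A\<in>\<A>. \<exists>p\<in>E. bowen_ball f t p (\<gamma>/2) \<subseteq> A \<and> A \<subseteq> closed_bowen_ball f t p \<gamma>)"

definition orbit_seg :: "(real \<Rightarrow> 'a \<Rightarrow> 'a) \<Rightarrow> real \<Rightarrow> 'a \<Rightarrow> 'a set" where
  "orbit_seg f s x = {f r x | r. r \<in> {-s..s}}"

definition Gamma_prod :: "(real \<Rightarrow> 'a::metric_space \<Rightarrow> 'a) \<Rightarrow> real \<Rightarrow> 'a \<times> 'a \<Rightarrow> ('a \<times> 'a) set" where
  "Gamma_prod f \<epsilon> p = {q. \<forall>t. dprod (pflow f t p) (pflow f t q) < \<epsilon>}"

definition NE_prod :: "(real \<Rightarrow> 'a::metric_space \<Rightarrow> 'a) \<Rightarrow> real \<Rightarrow> ('a \<times> 'a) set" where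
  "NE_prod f \<epsilon> = {p. \<not> (\<exists>s>0. Gamma_prod f \<epsilon> p \<subseteq> orbit_seg f s (fst p) \<times> orbit_seg f s (snd p))}"

definition product_expansive :: "(real \<Rightarrow> 'a::metric_space \<Rightarrow> 'a) \<Rightarrow> ('a \<times> 'a) measure \<Rightarrow> real \<Rightarrow> bool" where
  "product_expansive f \<nu> \<epsilon> \<longleftrightarrow> NE_prod f \<epsilon> \<in> null_sets \<nu>"

definition pflow_invariant :: "(real \<Rightarrow> 'a::metric_space \<Rightarrow> 'a) \<Rightarrow> ('a \<times> 'a) measure \<Rightarrow> bool" where
  "pflow_invariant f \<nu> \<longleftrightarrow>
     (\<forall>t. pflow f t \<in> measurable \<nu> \<nu> \<and> distr \<nu> \<nu> (pflow f t) = \<nu>)"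

end

theory Submission
  imports Defs
begin

text \<open>
  By regularity of \<open>\<nu>\<close> there is a closed, hence compact, set \<open>L\<close> disjoint
  from \<open>Q\<close> with \<open>\<nu>(-Q - L)\<close> small. Call \<open>p\<close> shadowed by \<open>L\<close> up to time \<open>n\<close> if some point
  of \<open>L\<close> stays \<open>2\<gamma>\<close>-close to \<open>p\<close> under the product flow for all times in \<open>[-n, n]\<close>.
  If \<open>p \<in> Q\<close> is shadowed for every \<open>n\<close>, compactness gives a point of \<open>L\<close> in
  \<open>\<Gamma>\<^sub>\<epsilon>(p)\<close>, because \<open>2\<gamma> < \<epsilon>\<close>; for \<open>p\<close> outside the null set \<open>NE\<^sup>\<times>(\<epsilon>)\<close> this point
  lies in a product of orbit segments through \<open>p\<close>, hence in \<open>Q\<close>, which is impossible.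
  So the shadowed part of \<open>Q\<close> decreases to a null set and is small from some time \<open>N\<close> on.

  For \<open>t \<ge> 2N\<close> take the cells of the partition at time \<open>t\<close> that meet the preimage of the
  unshadowed part of \<open>Q\<close> under the time-\<open>t/2\<close> map. Two points of one cell stay \<open>2\<gamma>\<close>-close
  on \<open>[0, t]\<close>, hence on \<open>[t/2 - N, t/2 + N]\<close>; so the time-\<open>t/2\<close> map sends the symmetric
  difference of \<open>Q\<close> and the union of these cells into the shadowed part of \<open>Q\<close> together
  with \<open>-Q - L\<close>, and invariance of \<open>\<nu>\<close> bounds its measure by \<open>\<alpha>\<close>.
\<close>

text \<open>
  HOL-Analysis proves regularity of finite Borel measures (\<open>inner_regular\<close>) only on types of
  class \<open>second_countable_topology\<close> and \<open>complete_space\<close>; the theorem concerns an arbitrary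
  \<open>metric_space\<close> type, so closed/open regularity is established here directly.
\<close>

definition closed_open_regular :: "'a::metric_space measure \<Rightarrow> 'a set \<Rightarrow> bool" where
  "closed_open_regular M B \<longleftrightarrow>
     (\<forall>e>0. \<exists>F U. closed F \<and> open U \<and> F \<subseteq> B \<and> B \<subseteq> U \<and> measure M (U - F) \<le> e)"

lemma closed_open_regularE:
  assumes "closed_open_regular M B" and "e > 0"
  obtains F U where "closed F" "open U" "F \<subseteq> B" "B \<subseteq> U" "measure M (U - F) \<le> e"
proof -
  from assms have "\<exists>F U. closed F \<and> open U \<and> F \<subseteq> B \<and> B \<subseteq> U \<and> measure M (U - F) \<le> e"
    unfolding closed_open_regular_def by simp
  then show ?thesis
    using that by (elim exE conjE)
qed

lemma closed_open_regular_open: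
  fixes M :: "'a::metric_space measure"
  assumes "finite_measure M" and M: "sets M = sets borel" and "open S"
  shows "closed_open_regular M S"
  unfolding closed_open_regular_def
proof (intro allI impI)
  interpret finite_measure M by fact
  fix e :: real
  assume "e > 0"
  show "\<exists>F U. closed F \<and> open U \<and> F \<subseteq> S \<and> S \<subseteq> U \<and> measure M (U - F) \<le> e"
  proof (cases "S = UNIV")
    case True
    with \<open>e > 0\<close> show ?thesis by (intro exI[of _ UNIV]) auto
  next
    case False
    define F where "F n = {x. 1 / real (Suc n) \<le> infdist x (- S)}" for n
    have closed_F: "closed (F n)" for n
      unfolding F_def by (intro closed_Collect_le continuous_intros)
    have "1 / real (Suc n) \<le> 1 / real (Suc m)" if "m \<le> n" for m n
      using that by (simp add: frac_le)
    then have "incseq F"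
      unfolding incseq_def F_def by (blast intro: order_trans)
    have pos_iff: "x \<in> S \<longleftrightarrow> infdist x (- S) > 0" for x
      using in_closed_iff_infdist_zero[of "- S" x] infdist_nonneg[of x "- S"] \<open>open S\<close> False
      by force
    have "(\<Union>n. F n) = S"
    proof
      show "(\<Union>n. F n) \<subseteq> S"
      proof
        fix x
        assume "x \<in> (\<Union>n. F n)"
        then obtain n where "1 / real (Suc n) \<le> infdist x (- S)"
          unfolding F_def by blast
        moreover have "0 < 1 / real (Suc n)"
          by simp
        ultimately have "0 < infdist x (- S)"
          by linarith
        then show "x \<in> S"
          using pos_iff by blast
      qed
      show "S \<subseteq> (\<Union>n. F n)"
      proof
        fix x
        assume "x \<in> S"
        then obtain n where "1 / real (Suc n) < infdist x (- S)"
          using pos_iff nat_approx_posE by blast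
        then show "x \<in> (\<Union>n. F n)"
          unfolding F_def by (blast intro: less_imp_le)
      qed
    qed
    moreover have "range F \<subseteq> sets M"
      using closed_F M by auto
    ultimately have "(\<lambda>n. measure M (F n)) \<longlonglongrightarrow> measure M S"
      using finite_Lim_measure_incseq[of F] \<open>incseq F\<close> by simp
    from LIMSEQ_D[OF this \<open>e > 0\<close>] obtain n where "\<bar>measure M (F n) - measure M S\<bar> < e"
      by auto
    moreover have "F n \<subseteq> S"
      using \<open>(\<Union>n. F n) = S\<close> by blast
    moreover have "measure M (S - F n) = measure M S - measure M (F n)"
      using \<open>F n \<subseteq> S\<close> closed_F \<open>open S\<close> M by (intro finite_measure_Diff) auto
    ultimately show ?thesis
      using closed_F \<open>open S\<close> by (intro exI[of _ "F n"] exI[of _ S]) auto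
  qed
qed

lemma closed_open_regular_Compl:
  assumes "closed_open_regular M B"
  shows "closed_open_regular M (- B)"
  unfolding closed_open_regular_def
proof (intro allI impI)
  fix e :: real
  assume "e > 0"
  with assms obtain F U where "closed F" "open U" "F \<subseteq> B" "B \<subseteq> U" and UF: "measure M (U - F) \<le> e"
    by (rule closed_open_regularE)
  show "\<exists>F' U'. closed F' \<and> open U' \<and> F' \<subseteq> - B \<and> - B \<subseteq> U' \<and> measure M (U' - F') \<le> e"
  proof (intro exI conjI)
    show "closed (- U)"
      using \<open>open U\<close> by (rule closed_Compl)
    show "open (- F)"
      using \<open>closed F\<close> by (rule open_Compl)
    show "- U \<subseteq> - B" "- B \<subseteq> - F"
      using \<open>F \<subseteq> B\<close> \<open>B \<subseteq> U\<close> by blast+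
    have "- F - - U = U - F"
      by blast
    then show "measure M (- F - - U) \<le> e"
      using UF by (simp only:)
  qed
qed

lemma closed_open_regular_UN:
  fixes M :: "'a::metric_space measure" and A :: "nat \<Rightarrow> 'a set"
  assumes "finite_measure M" and M: "sets M = sets borel" and A: "\<And>i. closed_open_regular M (A i)"
  shows "closed_open_regular M (\<Union>i. A i)"
  unfolding closed_open_regular_def
proof (intro allI impI)
  interpret finite_measure M by fact
  fix e :: real
  assume "e > 0"
  have "\<forall>i. \<exists>F U. closed F \<and> open U \<and> F \<subseteq> A i \<and> A i \<subseteq> U \<and> measure M (U - F) \<le> e / 2 * (1/2) ^ Suc i"
  proof
    fix i
    have pos: "e / 2 * (1/2) ^ Suc i > 0"
      using \<open>e > 0\<close> by simp
    from A[of i] have "\<forall>\<delta>>0. \<exists>F U. closed F \<and> open U \<and> F \<subseteq> A i \<and> A i \<subseteq> U \<and> measure M (U - F) \<le> \<delta>"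
      unfolding closed_open_regular_def .
    from mp[OF spec[OF this] pos]
    show "\<exists>F U. closed F \<and> open U \<and> F \<subseteq> A i \<and> A i \<subseteq> U \<and> measure M (U - F) \<le> e / 2 * (1/2) ^ Suc i" .
  qed
  then obtain F U where "\<forall>i. closed (F i) \<and> open (U i) \<and> F i \<subseteq> A i \<and> A i \<subseteq> U i \<and>
      measure M (U i - F i) \<le> e / 2 * (1/2) ^ Suc i"
    unfolding choice_iff by (elim exE)
  then have closed_F: "\<And>i. closed (F i)" and open_U: "\<And>i. open (U i)"
    and FAU: "\<And>i. F i \<subseteq> A i" "\<And>i. A i \<subseteq> U i"
    and UF: "\<And>i. measure M (U i - F i) \<le> e / 2 * (1/2) ^ Suc i"
    by simp_all
  have sets_F: "F i \<in> sets M" and sets_UF: "U i - F i \<in> sets M" for i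
    using closed_F open_U M by auto
  have sets_UN_F: "(\<Union>i. F i) \<in> sets M" and sets_UN_UF: "(\<Union>i. U i - F i) \<in> sets M"
    using sets_F sets_UF by (intro sets.countable_UN; auto)+
  define G where "G N = (\<Union>i<N. F i)" for N
  have closed_G: "closed (G N)" for N
    unfolding G_def using closed_F by auto
  then have sets_G: "G N \<in> sets M" for N
    unfolding M by (rule borel_closed)
  have "incseq G"
    unfolding G_def incseq_def by (intro allI impI UN_mono) auto
  have "(\<lambda>N. measure M (G N)) \<longlonglongrightarrow> measure M (\<Union>i. F i)"
  proof -
    have "(\<Union>N. G N) = (\<Union>i. F i)"
      unfolding G_def by auto
    moreover have "range G \<subseteq> sets M"
      using sets_G by blast
    ultimately show ?thesis
      using finite_Lim_measure_incseq[of G] \<open>incseq G\<close> by simp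
  qed
  from LIMSEQ_D[OF this, of "e / 2"] \<open>e > 0\<close> obtain N
    where N: "\<bar>measure M (G N) - measure M (\<Union>i. F i)\<bar> < e / 2"
    by auto
  have geometric: "(\<lambda>i. e / 2 * (1/2) ^ Suc i) sums (e / 2)"
    using sums_mult[OF power_half_series, of "e / 2"] by simp
  have summable_UF: "summable (\<lambda>i. measure M (U i - F i))"
    by (rule summable_comparison_test[OF _ sums_summable[OF geometric]]) (use UF in auto)
  have "measure M (\<Union>i. U i - F i) \<le> (\<Sum>i. measure M (U i - F i))"
    using sets_UF summable_UF by (intro finite_measure_subadditive_countably) auto
  also have "\<dots> \<le> e / 2"
    using suminf_le[OF UF summable_UF sums_summable[OF geometric]] sums_unique[OF geometric]
    by simp
  finally have outer: "measure M (\<Union>i. U i - F i) \<le> e / 2" .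
  have "G N \<subseteq> (\<Union>i. F i)"
    unfolding G_def by blast
  with sets_UN_F sets_G have "measure M ((\<Union>i. F i) - G N) = measure M (\<Union>i. F i) - measure M (G N)"
    by (rule finite_measure_Diff)
  then have inner: "measure M ((\<Union>i. F i) - G N) \<le> e / 2"
    using N unfolding abs_less_iff by linarith
  have sets_Diff: "(\<Union>i. F i) - G N \<in> sets M"
    using sets_UN_F sets_G by (rule sets.Diff)
  have "(\<Union>i. U i) - G N \<subseteq> (\<Union>i. U i - F i) \<union> ((\<Union>i. F i) - G N)"
    by blast
  moreover have "(\<Union>i. U i - F i) \<union> ((\<Union>i. F i) - G N) \<in> sets M"
    using sets_UN_UF sets_Diff by (rule sets.Un)
  ultimately have "measure M ((\<Union>i. U i) - G N) \<le> measure M ((\<Union>i. U i - F i) \<union> ((\<Union>i. F i) - G N))"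
    by (rule finite_measure_mono)
  also have "\<dots> \<le> measure M (\<Union>i. U i - F i) + measure M ((\<Union>i. F i) - G N)"
    using sets_UN_UF sets_Diff by (rule measure_Un_le)
  finally have UG: "measure M ((\<Union>i. U i) - G N) \<le> e"
    using outer inner by linarith
  show "\<exists>F U. closed F \<and> open U \<and> F \<subseteq> (\<Union>i. A i) \<and> (\<Union>i. A i) \<subseteq> U \<and> measure M (U - F) \<le> e"
  proof (intro exI conjI)
    show "closed (G N)"
      by (rule closed_G)
    show "open (\<Union>i. U i)"
      using open_U by auto
    show "G N \<subseteq> (\<Union>i. A i)" "(\<Union>i. A i) \<subseteq> (\<Union>i. U i)"
      using FAU unfolding G_def by blast+
  qed (rule UG)
qed

lemma closed_open_regular_sets:
  fixes M :: "'a::metric_space measure"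
  assumes "finite_measure M" and M: "sets M = sets borel" and "B \<in> sets M"
  shows "closed_open_regular M B"
proof -
  have "B \<in> sigma_sets UNIV {S. open S}"
    using assms(3) unfolding M sets_borel .
  then show ?thesis
  proof (induction rule: sigma_sets.induct)
    case (Basic S)
    then have "open S"
      by simp
    then show ?case
      by (rule closed_open_regular_open[OF assms(1) M])
  next
    case Empty
    show ?case
      using open_empty by (rule closed_open_regular_open[OF assms(1) M])
  next
    case (Compl B)
    from Compl.IH have "closed_open_regular M (- B)"
      by (rule closed_open_regular_Compl)
    then show ?case
      by (simp only: Compl_eq_Diff_UNIV)
  next
    case (Union A)
    from Union.IH show ?case
      by (rule closed_open_regular_UN[OF assms(1) M])
  qed
qed

lemma closed_inner_approximation:
  fixes M :: "'a::metric_space measure"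
  assumes "finite_measure M" and M: "sets M = sets borel" and "B \<in> sets M" and "e > 0"
  obtains F where "closed F" "F \<subseteq> B" "measure M (B - F) \<le> e"
proof -
  interpret finite_measure M by fact
  have "closed_open_regular M B"
    using assms(1-3) by (rule closed_open_regular_sets)
  then obtain F U where "closed F" "open U" "F \<subseteq> B" "B \<subseteq> U" and UF: "measure M (U - F) \<le> e"
    using \<open>e > 0\<close> by (rule closed_open_regularE)
  have "U - F \<in> sets M"
    unfolding M using \<open>open U\<close> \<open>closed F\<close> by (intro sets.Diff borel_open borel_closed)
  with \<open>B \<subseteq> U\<close> have "measure M (B - F) \<le> measure M (U - F)"
    by (intro finite_measure_mono) auto
  with UF have "measure M (B - F) \<le> e"
    by linarith
  with \<open>closed F\<close> \<open>F \<subseteq> B\<close> show ?thesis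
    by (rule that)
qed

lemma compact_UNIV_Times:
  assumes "compact (UNIV :: 'a::topological_space set)" "compact (UNIV :: 'b::topological_space set)"
  shows "compact (UNIV :: ('a \<times> 'b) set)"
  using compact_Times[OF assms] by (simp only: UNIV_Times_UNIV)

lemma continuous_flow_continuous_on:
  assumes "continuous_flow f"
  shows "continuous_on UNIV (f s)"
proof -
  have "continuous_on UNIV (\<lambda>(t, x). f t x)"
    using assms unfolding continuous_flow_def by simp
  then have "continuous_on UNIV (\<lambda>x. (\<lambda>(t, x). f t x) (s, x))"
    by (rule continuous_on_compose2) (auto intro: continuous_on_Pair continuous_on_const continuous_on_id)
  then show ?thesis
    by simp
qed

lemma pflow_add:
  assumes "continuous_flow f"
  shows "pflow f (s + t) p = pflow f s (pflow f t p)"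
  using assms unfolding continuous_flow_def pflow_def by simp

lemma pflow_zero:
  assumes "continuous_flow f"
  shows "pflow f 0 p = p"
  using assms unfolding continuous_flow_def pflow_def by simp

lemma pflow_mem_iff:
  assumes "continuous_flow f" and "\<forall>t s. (\<lambda>(x, y). (f t x, f s y)) ` Q = Q"
  shows "pflow f t p \<in> Q \<longleftrightarrow> p \<in> Q"
proof -
  have forward: "pflow f t p \<in> Q" if "p \<in> Q" for t p
  proof -
    from \<open>p \<in> Q\<close> have "(\<lambda>(x, y). (f t x, f t y)) p \<in> (\<lambda>(x, y). (f t x, f t y)) ` Q"
      by (rule imageI)
    then show ?thesis
      using assms(2) by (simp add: pflow_def case_prod_beta)
  qed
  show ?thesis
    using forward[of p t] forward[of "pflow f t p" "- t"]
      pflow_add[OF assms(1), of "- t" t p] pflow_zero[OF assms(1), of p]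
    by auto
qed

lemma dprod_commute: "dprod p q = dprod q p"
  unfolding dprod_def by (simp add: dist_commute)

lemma dprod_triangle: "dprod p r \<le> dprod p q + dprod q r"
  using dist_triangle[of "fst p" "fst r" "fst q"] dist_triangle[of "snd p" "snd r" "snd q"]
  unfolding dprod_def by linarith

lemma continuous_on_dprod_pflow:
  assumes "continuous_flow f" "continuous_on S g" "continuous_on S h"
  shows "continuous_on S (\<lambda>z. dprod (pflow f s (g z)) (pflow f s (h z)))"
proof -
  have flow: "continuous_on S (\<lambda>z. f s (k z))" if "continuous_on S k" for k
    using continuous_flow_continuous_on[OF assms(1)] that by (rule continuous_on_compose2) simp
  show ?thesis
    unfolding dprod_def pflow_def
    by (intro continuous_on_max continuous_on_dist continuous_on_fst continuous_on_snd continuous_on_Pair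
        flow assms)
qed

definition two_sided_bowen_cball ::
    "(real \<Rightarrow> 'a::metric_space \<Rightarrow> 'a) \<Rightarrow> real \<Rightarrow> 'a \<times> 'a \<Rightarrow> real \<Rightarrow> ('a \<times> 'a) set" where
  "two_sided_bowen_cball f T p r = {q. \<forall>s\<in>{-T..T}. dprod (pflow f s p) (pflow f s q) \<le> r}"

definition bowen_shadow ::
    "(real \<Rightarrow> 'a::metric_space \<Rightarrow> 'a) \<Rightarrow> ('a \<times> 'a) set \<Rightarrow> real \<Rightarrow> real \<Rightarrow> ('a \<times> 'a) set" where
  "bowen_shadow f L T r = {p. \<exists>q\<in>L. q \<in> two_sided_bowen_cball f T p r}"

lemma two_sided_bowen_cball_antimono:
  "T \<le> T' \<Longrightarrow> two_sided_bowen_cball f T' p r \<subseteq> two_sided_bowen_cball f T p r"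
  unfolding two_sided_bowen_cball_def by auto

lemma bowen_shadow_antimono:
  "T \<le> T' \<Longrightarrow> bowen_shadow f L T' r \<subseteq> bowen_shadow f L T r"
  unfolding bowen_shadow_def using two_sided_bowen_cball_antimono by blast

lemma closed_two_sided_bowen_cball:
  assumes "continuous_flow f"
  shows "closed (two_sided_bowen_cball f T p r)"
proof -
  have "two_sided_bowen_cball f T p r =
      (\<Inter>s\<in>{-T..T}. {q. dprod (pflow f s p) (pflow f s q) \<le> r})"
    unfolding two_sided_bowen_cball_def by auto
  moreover have "closed {q. dprod (pflow f s p) (pflow f s q) \<le> r}" for s
    by (intro closed_Collect_le continuous_on_dprod_pflow[OF assms] continuous_on_const continuous_on_id)
  ultimately show ?thesis
    by (simp add: closed_INT)
qed

lemma closed_bowen_shadow: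
  fixes L :: "('a::metric_space \<times> 'a) set"
  assumes "compact (UNIV :: 'a set)" "continuous_flow f" "closed L"
  shows "closed (bowen_shadow f L T r)"
proof -
  define Z where "Z = {z. snd z \<in> L \<and> snd z \<in> two_sided_bowen_cball f T (fst z) r}"
  have Z: "Z = (UNIV \<times> L) \<inter> (\<Inter>s\<in>{-T..T}. {z. dprod (pflow f s (fst z)) (pflow f s (snd z)) \<le> r})"
    unfolding Z_def two_sided_bowen_cball_def by auto
  have closed_dprod: "closed {z. dprod (pflow f s (fst z)) (pflow f s (snd z)) \<le> r}" for s
    by (intro closed_Collect_le continuous_on_dprod_pflow[OF assms(2)] continuous_on_const
        continuous_on_fst continuous_on_snd continuous_on_id)
  have "closed Z"
    unfolding Z by (intro closed_Int closed_INT ballI closed_Times closed_UNIV \<open>closed L\<close> closed_dprod)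
  moreover have "compact (UNIV :: (('a \<times> 'a) \<times> ('a \<times> 'a)) set)"
    using assms(1) by (intro compact_UNIV_Times)
  ultimately have "compact Z"
    using compact_Int_closed by (metis inf_top.left_neutral)
  then have "compact (fst ` Z)"
    by (intro compact_continuous_image continuous_on_fst continuous_on_id)
  moreover have "fst ` Z = bowen_shadow f L T r"
  proof (intro equalityI subsetI)
    fix p
    assume "p \<in> bowen_shadow f L T r"
    then obtain q where "q \<in> L" "q \<in> two_sided_bowen_cball f T p r"
      unfolding bowen_shadow_def by blast
    then have "(p, q) \<in> Z"
      unfolding Z_def by simp
    then show "p \<in> fst ` Z"
      by (metis fst_conv image_eqI)
  qed (auto simp: Z_def bowen_shadow_def)
  ultimately show ?thesis
    by (metis compact_imp_closed)
qed

lemma Gamma_prod_meets_compact_shadowing_set: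
  assumes "continuous_flow f" "compact L" "r < \<epsilon>"
    and shadowed: "\<And>n::nat. p \<in> bowen_shadow f L (real n) r"
  shows "L \<inter> Gamma_prod f \<epsilon> p \<noteq> {}"
proof -
  have "L \<inter> (\<Inter>n. two_sided_bowen_cball f (real n) p r) \<noteq> {}"
  proof (rule compact_imp_fip_image[OF \<open>compact L\<close>])
    show "closed (two_sided_bowen_cball f (real n) p r)" for n
      using assms(1) by (rule closed_two_sided_bowen_cball)
    fix I :: "nat set"
    assume "finite I"
    define m where "m = Max (insert 0 I)"
    have "two_sided_bowen_cball f (real m) p r \<subseteq> two_sided_bowen_cball f (real i) p r"
      if "i \<in> I" for i
      using \<open>finite I\<close> that by (intro two_sided_bowen_cball_antimono) (simp add: m_def)
    moreover have "L \<inter> two_sided_bowen_cball f (real m) p r \<noteq> {}"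
      using shadowed[of m] unfolding bowen_shadow_def by blast
    ultimately show "L \<inter> (\<Inter>i\<in>I. two_sided_bowen_cball f (real i) p r) \<noteq> {}"
      by blast
  qed
  moreover have "(\<Inter>n. two_sided_bowen_cball f (real n) p r) \<subseteq> Gamma_prod f \<epsilon> p"
  proof
    fix q
    assume q: "q \<in> (\<Inter>n. two_sided_bowen_cball f (real n) p r)"
    show "q \<in> Gamma_prod f \<epsilon> p"
      unfolding Gamma_prod_def
    proof (intro CollectI allI)
      fix s :: real
      obtain n :: nat where "\<bar>s\<bar> \<le> real n"
        using real_arch_simple by blast
      then have "s \<in> {- real n..real n}"
        by auto
      moreover have "q \<in> two_sided_bowen_cball f (real n) p r"
        using q by blast
      ultimately have "dprod (pflow f s p) (pflow f s q) \<le> r"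
        unfolding two_sided_bowen_cball_def by blast
      then show "dprod (pflow f s p) (pflow f s q) < \<epsilon>"
        using \<open>r < \<epsilon>\<close> by linarith
    qed
  qed
  ultimately show ?thesis
    by blast
qed

lemma Gamma_prod_subset_invariant_set:
  assumes "\<forall>t s. (\<lambda>(x, y). (f t x, f s y)) ` Q = Q" "p \<in> Q" "p \<notin> NE_prod f \<epsilon>"
  shows "Gamma_prod f \<epsilon> p \<subseteq> Q"
proof
  fix q
  assume q: "q \<in> Gamma_prod f \<epsilon> p"
  from assms(3) have "\<exists>s>0. Gamma_prod f \<epsilon> p \<subseteq> orbit_seg f s (fst p) \<times> orbit_seg f s (snd p)"
    unfolding NE_prod_def by simp
  then obtain s where "Gamma_prod f \<epsilon> p \<subseteq> orbit_seg f s (fst p) \<times> orbit_seg f s (snd p)"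
    by blast
  with q have "q \<in> orbit_seg f s (fst p) \<times> orbit_seg f s (snd p)"
    by (rule rev_subsetD)
  then have "fst q \<in> orbit_seg f s (fst p)" and "snd q \<in> orbit_seg f s (snd p)"
    unfolding mem_Times_iff by simp_all
  then obtain r1 r2 where "fst q = f r1 (fst p)" and "snd q = f r2 (snd p)"
    unfolding orbit_seg_def by (elim CollectE exE conjE)
  then have "q = (\<lambda>(x, y). (f r1 x, f r2 y)) p"
    by (simp add: case_prod_beta prod_eq_iff)
  then have "q \<in> (\<lambda>(x, y). (f r1 x, f r2 y)) ` Q"
    using \<open>p \<in> Q\<close> by (rule image_eqI)
  moreover have "(\<lambda>(x, y). (f r1 x, f r2 y)) ` Q = Q"
    by (rule spec[OF spec[OF assms(1)]])
  ultimately show "q \<in> Q"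
    by simp
qed

lemma invariant_set_shadow_measure_small:
  fixes \<nu> :: "('a::metric_space \<times> 'a) measure"
  assumes "compact (UNIV :: 'a set)" "continuous_flow f" "finite_measure \<nu>" "sets \<nu> = sets borel"
    and "product_expansive f \<nu> \<epsilon>" "r < \<epsilon>"
    and "Q \<in> sets \<nu>" "\<forall>t s. (\<lambda>(x, y). (f t x, f s y)) ` Q = Q"
    and "closed L" "L \<inter> Q = {}" "\<alpha> > 0"
  obtains N :: nat where "measure \<nu> (Q \<inter> bowen_shadow f L (real N) r) < \<alpha>"
proof -
  interpret finite_measure \<nu> by fact
  define B where "B n = Q \<inter> bowen_shadow f L (real n) r" for n :: nat
  have "B n \<in> sets \<nu>" for n
    unfolding B_def using assms(7) borel_closed[OF closed_bowen_shadow[OF assms(1,2,9)]]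
    by (intro sets.Int) (simp_all add: assms(4))
  then have sets_B: "range B \<subseteq> sets \<nu>"
    by blast
  have "B n \<subseteq> B m" if "m \<le> n" for m n
    unfolding B_def using bowen_shadow_antimono[of "real m" "real n"] that by auto
  then have "decseq B"
    unfolding decseq_def by blast
  have "(\<Inter>n. B n) \<subseteq> NE_prod f \<epsilon>"
  proof
    fix p
    assume "p \<in> (\<Inter>n. B n)"
    then have "p \<in> Q" and shadowed: "\<And>n. p \<in> bowen_shadow f L (real n) r"
      unfolding B_def by auto
    show "p \<in> NE_prod f \<epsilon>"
    proof (rule ccontr)
      assume "p \<notin> NE_prod f \<epsilon>"
      with assms(8) \<open>p \<in> Q\<close> have "Gamma_prod f \<epsilon> p \<subseteq> Q"
        by (rule Gamma_prod_subset_invariant_set)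
      have "compact L"
        using compact_Int_closed[OF compact_UNIV_Times[OF assms(1,1)] \<open>closed L\<close>] by simp
      have "L \<inter> Gamma_prod f \<epsilon> p \<noteq> {}"
        by (rule Gamma_prod_meets_compact_shadowing_set[OF assms(2) \<open>compact L\<close> assms(6) shadowed])
      with \<open>Gamma_prod f \<epsilon> p \<subseteq> Q\<close> \<open>L \<inter> Q = {}\<close> show False
        by blast
    qed
  qed
  moreover have "(\<Inter>n. B n) \<in> sets \<nu>"
    using sets_B by (rule sets.countable_INT) simp
  moreover have "NE_prod f \<epsilon> \<in> null_sets \<nu>"
    using assms(5) unfolding product_expansive_def .
  ultimately have "(\<Inter>n. B n) \<in> null_sets \<nu>"
    by (metis null_sets_subset)
  then have "measure \<nu> (\<Inter>n. B n) = 0"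
    by (rule measure_eq_0_null_sets)
  moreover have "(\<lambda>n. measure \<nu> (B n)) \<longlonglongrightarrow> measure \<nu> (\<Inter>n. B n)"
    using sets_B \<open>decseq B\<close> by (rule finite_Lim_measure_decseq)
  ultimately have "eventually (\<lambda>n. measure \<nu> (B n) < \<alpha>) sequentially"
    using \<open>\<alpha> > 0\<close> by (metis order_tendstoD(2))
  then show ?thesis
    using that unfolding B_def eventually_sequentially by blast
qed

lemma closed_bowen_ball_shift:
  assumes "continuous_flow f" "x \<in> closed_bowen_ball f t c r" "y \<in> closed_bowen_ball f t c r"
    and "N \<le> T" "T + N \<le> t"
  shows "pflow f T y \<in> two_sided_bowen_cball f N (pflow f T x) (2 * r)"
  unfolding two_sided_bowen_cball_def
proof (intro CollectI ballI)
  fix s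
  assume "s \<in> {-N..N}"
  then have "s + T \<in> {0..t}"
    using assms(4,5) by auto
  then have "dprod (pflow f (s + T) c) (pflow f (s + T) x) \<le> r"
      "dprod (pflow f (s + T) c) (pflow f (s + T) y) \<le> r"
    using assms(2,3) unfolding closed_bowen_ball_def by auto
  then have "dprod (pflow f (s + T) x) (pflow f (s + T) y) \<le> 2 * r"
    using dprod_triangle[of "pflow f (s + T) x" "pflow f (s + T) y" "pflow f (s + T) c"]
      dprod_commute[of "pflow f (s + T) x" "pflow f (s + T) c"]
    by linarith
  then show "dprod (pflow f s (pflow f T x)) (pflow f s (pflow f T y)) \<le> 2 * r"
    by (simp add: pflow_add[OF assms(1)])
qed

lemma adapted_partition_covers:
  assumes "adapted_partition f t \<gamma> E \<A>"
  obtains A where "A \<in> \<A>" "x \<in> A"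
proof -
  from assms have "\<Union>\<A> = UNIV"
    unfolding adapted_partition_def by (rule conjunct1)
  then have "x \<in> \<Union>\<A>"
    by simp
  then show ?thesis
    using that by blast
qed

lemma adapted_partition_subset_closed_bowen_ball:
  assumes "adapted_partition f t \<gamma> E \<A>" "A \<in> \<A>"
  obtains c where "A \<subseteq> closed_bowen_ball f t c \<gamma>"
proof -
  from assms(1) have "\<forall>A\<in>\<A>. \<exists>p\<in>E. bowen_ball f t p (\<gamma>/2) \<subseteq> A \<and> A \<subseteq> closed_bowen_ball f t p \<gamma>"
    unfolding adapted_partition_def by (elim conjE)
  from bspec[OF this assms(2)] show ?thesis
    using that by blast
qed

lemma adapted_partition_approximates_invariant_set:
  assumes "continuous_flow f" "adapted_partition f t \<gamma> E \<A>"
    and "\<forall>t s. (\<lambda>(x, y). (f t x, f s y)) ` Q = Q" "L \<inter> Q = {}" "0 \<le> N" "2 * N \<le> t"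
  obtains S where "S \<subseteq> \<A>"
    "(\<Union>S - Q) \<union> (Q - \<Union>S) \<subseteq> pflow f (t / 2) -` ((Q \<inter> bowen_shadow f L N (2 * \<gamma>)) \<union> (- Q - L))"
proof -
  define \<psi> where "\<psi> = pflow f (t / 2)"
  define G where "G = Q - bowen_shadow f L N (2 * \<gamma>)"
  define S where "S = {A \<in> \<A>. \<exists>p\<in>A. \<psi> p \<in> G}"
  have Q_iff: "\<psi> x \<in> Q \<longleftrightarrow> x \<in> Q" for x
    unfolding \<psi>_def using assms(1,3) by (rule pflow_mem_iff)
  have not_L: "\<psi> x \<notin> L" if "x \<in> \<Union>S" for x
  proof
    assume "\<psi> x \<in> L"
    from that obtain A where "A \<in> \<A>" "x \<in> A" and "\<exists>p\<in>A. \<psi> p \<in> G"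
      unfolding S_def by blast
    then obtain p where "p \<in> A" "\<psi> p \<in> G"
      by blast
    obtain c where "A \<subseteq> closed_bowen_ball f t c \<gamma>"
      using assms(2) \<open>A \<in> \<A>\<close> by (rule adapted_partition_subset_closed_bowen_ball)
    then have "\<psi> x \<in> two_sided_bowen_cball f N (\<psi> p) (2 * \<gamma>)"
      unfolding \<psi>_def using \<open>x \<in> A\<close> \<open>p \<in> A\<close> assms(5,6)
      by (intro closed_bowen_ball_shift[OF assms(1)]) auto
    with \<open>\<psi> x \<in> L\<close> have "\<psi> p \<in> bowen_shadow f L N (2 * \<gamma>)"
      unfolding bowen_shadow_def by blast
    with \<open>\<psi> p \<in> G\<close> show False
      unfolding G_def by blast
  qed
  have not_G: "\<psi> x \<notin> G" if "x \<notin> \<Union>S" for x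
  proof
    assume "\<psi> x \<in> G"
    obtain A where "A \<in> \<A>" "x \<in> A"
      using assms(2) by (rule adapted_partition_covers)
    with \<open>\<psi> x \<in> G\<close> have "A \<in> S"
      unfolding S_def by blast
    with \<open>x \<in> A\<close> \<open>x \<notin> \<Union>S\<close> show False
      by blast
  qed
  have "S \<subseteq> \<A>"
    unfolding S_def by blast
  moreover have "(\<Union>S - Q) \<union> (Q - \<Union>S) \<subseteq> \<psi> -` ((Q \<inter> bowen_shadow f L N (2 * \<gamma>)) \<union> (- Q - L))"
  proof
    fix x
    assume "x \<in> (\<Union>S - Q) \<union> (Q - \<Union>S)"
    then show "x \<in> \<psi> -` ((Q \<inter> bowen_shadow f L N (2 * \<gamma>)) \<union> (- Q - L))"
    proof
      assume "x \<in> \<Union>S - Q"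
      then show ?thesis
        using not_L[of x] Q_iff[of x] by simp
    next
      assume "x \<in> Q - \<Union>S"
      then show ?thesis
        using not_G[of x] Q_iff[of x] unfolding G_def by simp
    qed
  qed
  ultimately show ?thesis
    unfolding \<psi>_def by (rule that)
qed

lemma pflow_invariant_measure_vimage:
  assumes "pflow_invariant f \<nu>" "sets \<nu> = sets borel" "B \<in> sets \<nu>"
  shows "pflow f t -` B \<in> sets \<nu>" "measure \<nu> (pflow f t -` B) = measure \<nu> B"
proof -
  have space: "space \<nu> = UNIV"
    using assms(2) by (metis sets_eq_imp_space_eq space_borel)
  have "\<forall>t. pflow f t \<in> measurable \<nu> \<nu> \<and> distr \<nu> \<nu> (pflow f t) = \<nu>"
    using assms(1) unfolding pflow_invariant_def .
  then have meas: "pflow f t \<in> measurable \<nu> \<nu>" and distr: "distr \<nu> \<nu> (pflow f t) = \<nu>"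
    by simp_all
  show "pflow f t -` B \<in> sets \<nu>"
    using measurable_sets[OF meas assms(3)] unfolding space by simp
  have "measure \<nu> B = measure (distr \<nu> \<nu> (pflow f t)) B"
    unfolding distr ..
  also have "\<dots> = measure \<nu> (pflow f t -` B \<inter> space \<nu>)"
    using meas assms(3) by (rule measure_distr)
  finally show "measure \<nu> (pflow f t -` B) = measure \<nu> B"
    unfolding space by simp
qed

lemma adapted_partition_measure_sym_diff_le:
  fixes \<nu> :: "('a::metric_space \<times> 'a) measure"
  assumes "compact (UNIV :: 'a set)" "continuous_flow f" "finite_measure \<nu>" "sets \<nu> = sets borel"
    and "pflow_invariant f \<nu>" "adapted_partition f t \<gamma> E \<A>"
    and "Q \<in> sets \<nu>" "\<forall>t s. (\<lambda>(x, y). (f t x, f s y)) ` Q = Q"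
    and "closed L" "L \<inter> Q = {}" "0 \<le> N" "2 * N \<le> t"
  obtains S where "S \<subseteq> \<A>"
    "measure \<nu> (sym_diff (\<Union>S) Q) \<le> measure \<nu> (Q \<inter> bowen_shadow f L N (2 * \<gamma>)) + measure \<nu> (- Q - L)"
proof -
  interpret finite_measure \<nu> by fact
  have "space \<nu> = UNIV"
    using assms(4) by (metis sets_eq_imp_space_eq space_borel)
  then have "- Q \<in> sets \<nu>"
    using sets.compl_sets[OF assms(7)] by (simp add: Compl_eq_Diff_UNIV)
  have "L \<in> sets \<nu>" "bowen_shadow f L N (2 * \<gamma>) \<in> sets \<nu>"
    unfolding assms(4) using \<open>closed L\<close> closed_bowen_shadow[OF assms(1,2) \<open>closed L\<close>]
    by (auto intro: borel_closed)
  then have sets_shadow: "Q \<inter> bowen_shadow f L N (2 * \<gamma>) \<in> sets \<nu>"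
    and sets_L: "- Q - L \<in> sets \<nu>"
    using assms(7) \<open>- Q \<in> sets \<nu>\<close> by auto
  define W where "W = (Q \<inter> bowen_shadow f L N (2 * \<gamma>)) \<union> (- Q - L)"
  have "W \<in> sets \<nu>"
    unfolding W_def using sets_shadow sets_L by (rule sets.Un)
  obtain S where "S \<subseteq> \<A>" and symdiff: "sym_diff (\<Union>S) Q \<subseteq> pflow f (t / 2) -` W"
    using adapted_partition_approximates_invariant_set[OF assms(2,6,8,10-12)]
    unfolding W_def by blast
  have "measure \<nu> (sym_diff (\<Union>S) Q) \<le> measure \<nu> (pflow f (t / 2) -` W)"
    using symdiff pflow_invariant_measure_vimage(1)[OF assms(5,4) \<open>W \<in> sets \<nu>\<close>]
    by (rule finite_measure_mono)
  also have "\<dots> = measure \<nu> W"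
    using assms(5,4) \<open>W \<in> sets \<nu>\<close> by (rule pflow_invariant_measure_vimage(2))
  also have "\<dots> \<le> measure \<nu> (Q \<inter> bowen_shadow f L N (2 * \<gamma>)) + measure \<nu> (- Q - L)"
    unfolding W_def using sets_shadow sets_L by (rule measure_Un_le)
  finally show ?thesis
    by (rule that[OF \<open>S \<subseteq> \<A>\<close>])
qed

theorem proposition4p7:
  fixes f :: "real \<Rightarrow> 'a::metric_space \<Rightarrow> 'a"
    and \<nu> :: "('a \<times> 'a) measure"
    and \<epsilon> \<gamma> :: real
    and \<A> :: "real \<Rightarrow> ('a \<times> 'a) set set"
    and Q :: "('a \<times> 'a) set"
  assumes "compact (UNIV :: 'a set)"
    and "continuous_flow f"
    and "prob_space \<nu>"
    and "sets \<nu> = sets borel"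
    and "pflow_invariant f \<nu>"
    and "product_expansive f \<nu> \<epsilon>"
    and "0 < \<gamma>" and "\<gamma> < \<epsilon> / 2"
    and "\<forall>t>0. \<exists>E. max_card_separated f t \<gamma> E \<and> adapted_partition f t \<gamma> E (\<A> t)"
    and "Q \<in> sets \<nu>"
    and "\<forall>t s. (\<lambda>(x, y). (f t x, f s y)) ` Q = Q"
  shows "\<forall>\<alpha>>0. \<exists>t0. \<forall>t\<ge>t0. \<exists>S\<subseteq>\<A> t. measure \<nu> ((\<Union>S - Q) \<union> (Q - \<Union>S)) < \<alpha>"
proof (intro allI impI)
  fix \<alpha> :: real
  assume "\<alpha> > 0"
  then have "\<alpha> / 2 > 0"
    by simp
  interpret prob_space \<nu> by fact
  have "space \<nu> = UNIV"
    using assms(4) by (metis sets_eq_imp_space_eq space_borel)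
  then have "- Q \<in> sets \<nu>"
    using sets.compl_sets[OF assms(10)] by (simp add: Compl_eq_Diff_UNIV)
  then obtain L where "closed L" "L \<subseteq> - Q" and L: "measure \<nu> (- Q - L) \<le> \<alpha> / 2"
    using closed_inner_approximation[OF finite_measure_axioms assms(4) _ \<open>\<alpha> / 2 > 0\<close>] by blast
  have "L \<inter> Q = {}" and "2 * \<gamma> < \<epsilon>"
    using \<open>L \<subseteq> - Q\<close> assms(8) by auto
  then obtain N :: nat where N: "measure \<nu> (Q \<inter> bowen_shadow f L (real N) (2 * \<gamma>)) < \<alpha> / 2"
    using invariant_set_shadow_measure_small[OF assms(1,2) finite_measure_axioms assms(4,6)
        \<open>2 * \<gamma> < \<epsilon>\<close> assms(10,11) \<open>closed L\<close> \<open>L \<inter> Q = {}\<close> \<open>\<alpha> / 2 > 0\<close>]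
    by blast
  have "\<exists>S\<subseteq>\<A> t. measure \<nu> (sym_diff (\<Union>S) Q) < \<alpha>" if "2 * real N + 1 \<le> t" for t
  proof -
    have "0 < t" "2 * real N \<le> t"
      using that of_nat_0_le_iff[of N] by linarith+
    then obtain E where "adapted_partition f t \<gamma> E (\<A> t)"
      using assms(9) by blast
    then obtain S where "S \<subseteq> \<A> t"
      and S: "measure \<nu> (sym_diff (\<Union>S) Q)
        \<le> measure \<nu> (Q \<inter> bowen_shadow f L (real N) (2 * \<gamma>)) + measure \<nu> (- Q - L)"
      using adapted_partition_measure_sym_diff_le[OF assms(1,2) finite_measure_axioms assms(4,5) _
          assms(10,11) \<open>closed L\<close> \<open>L \<inter> Q = {}\<close> of_nat_0_le_iff \<open>2 * real N \<le> t\<close>]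
      by blast
    from S N L have "measure \<nu> (sym_diff (\<Union>S) Q) < \<alpha>"
      by linarith
    with \<open>S \<subseteq> \<A> t\<close> show ?thesis
      by blast
  qed
  then show "\<exists>t0. \<forall>t\<ge>t0. \<exists>S\<subseteq>\<A> t. measure \<nu> (sym_diff (\<Union>S) Q) < \<alpha>"
    by blast
qed

end
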